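(* Let $X$ be a countable Markov shift over the alphabet $\mathbb N$, let $\phi\colon X\to\mathbb R$ be a measurable function, and assume there exists a Gibbs state for the potential $\phi$. Then $\sup\phi<\infty$, $\inf\phi=-\infty$, and $\sup_{n\ge1}D_n(\phi)<\infty$.
   Context: $\mathbb N=\{0,1,2,\dots\}$ with discrete topology; $A$ is a 0-1 matrix indexed by $\mathbb N$ with no zero row or column; $X=\{x\in\mathbb N^{\mathbb N}:A_{x_ix_{i+1}}=1\ \forall i\}$ with product topology and left shift $\sigma$. $E^n$ is the set of admissible strings $w_0\cdots w_{n-1}$ ($A_{w_iw_{i+1}}=1$ for consecutive letters), $[w]=\{x\in X:x_i=w_i,\ i<n\}$. $S_n\varphi=\sum_{i=0}^{n-1}\varphi\circ\sigma^i$. $D_n(\varphi)=\sup_{w\in E^n}\sup_{x,y\in[w]}(S_n\varphi(x)-S_n\varphi(y))$. A Borel probability measure $\mu_\phi$ on $X$ is a Gibbs state for $\phi$ if there are constants $c_0\ge1$, $P\in\mathbb R$ with $c_0^{-1}\le\mu_\phi[x_0,\dots,x_{n-1}]/\exp(-Pn+S_n\phi(x))\le c_0$ for all $n\ge1$, $x\in X$. *)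

theory Defs
  imports "HOL-Probability.Probability"
begin

text \<open>Countable Markov shift over the alphabet nat, transition matrix A (0-1 matrix
  represented as a boolean relation: A i j = True iff A_{ij} = 1).
  nat carries its (discrete) order topology, nat => nat the product topology.\<close>

definition shift_space :: "(nat \<Rightarrow> nat \<Rightarrow> bool) \<Rightarrow> (nat \<Rightarrow> nat) set" where
  "shift_space A = {x. \<forall>i. A (x i) (x (Suc i))}"

definition shift :: "(nat \<Rightarrow> nat) \<Rightarrow> (nat \<Rightarrow> nat)" where
  "shift x = (\<lambda>k. x (Suc k))"

definition birkhoff_sum :: "((nat \<Rightarrow> nat) \<Rightarrow> real) \<Rightarrow> nat \<Rightarrow> (nat \<Rightarrow> nat) \<Rightarrow> real" where
  "birkhoff_sum \<phi> n x = (\<Sum>i<n. \<phi> ((shift ^^ i) x))"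

definition admissible_words :: "(nat \<Rightarrow> nat \<Rightarrow> bool) \<Rightarrow> nat \<Rightarrow> nat list set" where
  "admissible_words A n = {w. length w = n \<and> (\<forall>i. Suc i < n \<longrightarrow> A (w ! i) (w ! Suc i))}"

definition cylinder :: "(nat \<Rightarrow> nat \<Rightarrow> bool) \<Rightarrow> nat list \<Rightarrow> (nat \<Rightarrow> nat) set" where
  "cylinder A w = {x \<in> shift_space A. \<forall>i<length w. x i = w ! i}"

definition variation :: "(nat \<Rightarrow> nat \<Rightarrow> bool) \<Rightarrow> ((nat \<Rightarrow> nat) \<Rightarrow> real) \<Rightarrow> nat \<Rightarrow> ereal" where
  "variation A \<phi> n = (SUP w \<in> admissible_words A n. SUP p \<in> cylinder A w \<times> cylinder A w.
       ereal (birkhoff_sum \<phi> n (fst p) - birkhoff_sum \<phi> n (snd p)))"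

definition gibbs_state :: "(nat \<Rightarrow> nat \<Rightarrow> bool) \<Rightarrow> ((nat \<Rightarrow> nat) \<Rightarrow> real) \<Rightarrow> (nat \<Rightarrow> nat) measure \<Rightarrow> bool" where
  "gibbs_state A \<phi> \<mu> \<longleftrightarrow>
     sets \<mu> = sets (restrict_space borel (shift_space A)) \<and> prob_space \<mu> \<and>
     (\<exists>c0::real. \<exists>P::real. c0 \<ge> 1 \<and>
        (\<forall>n\<ge>1. \<forall>x \<in> shift_space A.
           inverse c0 \<le> measure \<mu> (cylinder A (map x [0..<n])) / exp (- P * real n + birkhoff_sum \<phi> n x)
         \<and> measure \<mu> (cylinder A (map x [0..<n])) / exp (- P * real n + birkhoff_sum \<phi> n x) \<le> c0))"

end

theory Submission
  imports Defs
begin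

text \<open>Taking \<open>n = 1\<close> in the Gibbs inequality gives
  \<open>exp (\<phi> x) \<le> c\<^sub>0 e\<^sup>P \<mu>[x\<^sub>0]\<close>. Since \<open>\<mu>[x\<^sub>0] \<le> 1\<close>, \<open>\<phi>\<close> is bounded above; since the
  infinitely many disjoint cylinders \<open>[a]\<close> share total mass at most 1, some \<open>\<mu>[a]\<close> is
  arbitrarily small, so \<open>\<phi>\<close> is unbounded below. Two points \<open>x, y\<close> of one \<open>n\<close>-cylinder
  \<open>[w]\<close> have \<open>exp (S\<^sub>n\<phi> x - nP) \<le> c\<^sub>0 \<mu>[w] \<le> c\<^sub>0\<^sup>2 exp (S\<^sub>n\<phi> y - nP)\<close>, which bounds
  \<open>D\<^sub>n(\<phi>)\<close> by \<open>2 ln c\<^sub>0\<close>.\<close>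

lemma ratio_bounds_imp_mult_bounds:
  fixes c m e :: real
  assumes "inverse c \<le> m / e" "m / e \<le> c" "c > 0" "e > 0"
  shows "e \<le> c * m" "m \<le> c * e"
proof -
  have "inverse c * e \<le> m"
    using assms(1,4) by (simp add: pos_le_divide_eq)
  then have "c * (inverse c * e) \<le> c * m"
    using assms(3) by (intro mult_left_mono) auto
  moreover have "c * (inverse c * e) = e"
    using assms(3) by (simp flip: mult.assoc)
  ultimately show "e \<le> c * m"
    by simp
  show "m \<le> c * e"
    using assms(2,4) by (simp add: pos_divide_le_eq)
qed

lemma map_upt_length_cylinder:
  assumes "x \<in> cylinder A w"
  shows "map x [0..<length w] = w"
  using assms by (intro nth_equalityI) (auto simp: cylinder_def)

lemma shift_space_point_starting_at:
  assumes "\<forall>i. \<exists>j. A i j"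
  obtains x where "x \<in> shift_space A" "x 0 = a"
proof -
  define next_letter where "next_letter i = (SOME j. A i j)" for i
  have "A i (next_letter i)" for i
    using assms unfolding next_letter_def by (metis someI_ex)
  then have "(\<lambda>k. (next_letter ^^ k) a) \<in> shift_space A"
    by (simp add: shift_space_def)
  then show thesis by (rule that) simp
qed

lemma (in prob_space) exists_small_disjoint_event:
  assumes "finite I" "I \<noteq> {}" "F ` I \<subseteq> events" "disjoint_family_on F I"
  shows "\<exists>i\<in>I. prob (F i) \<le> 1 / card I"
proof (rule ccontr)
  assume "\<not> ?thesis"
  then have "(\<Sum>i\<in>I. 1 / card I) < (\<Sum>i\<in>I. prob (F i))"
    using assms(1,2) by (intro sum_strict_mono) auto
  also have "\<dots> = prob (\<Union>i\<in>I. F i)"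
    using assms by (intro finite_measure_finite_Union[symmetric])
  also have "\<dots> \<le> 1"
    by (rule prob_le_1)
  finally show False
    using assms(1,2) by simp
qed

locale gibbs_measure = prob_space \<mu>
  for \<mu> :: "(nat \<Rightarrow> nat) measure" +
  fixes A :: "nat \<Rightarrow> nat \<Rightarrow> bool" and \<phi> :: "(nat \<Rightarrow> nat) \<Rightarrow> real" and c0 P :: real
  assumes c0_ge_1: "c0 \<ge> 1"
    and gibbs_inequality: "\<And>n x. n \<ge> 1 \<Longrightarrow> x \<in> shift_space A \<Longrightarrow>
      inverse c0 \<le> prob (cylinder A (map x [0..<n])) / exp (- P * real n + birkhoff_sum \<phi> n x) \<and>
      prob (cylinder A (map x [0..<n])) / exp (- P * real n + birkhoff_sum \<phi> n x) \<le> c0"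

lemma gibbs_stateE:
  assumes "gibbs_state A \<phi> \<mu>"
  obtains c0 P where "gibbs_measure \<mu> A \<phi> c0 P"
  using assms unfolding gibbs_state_def gibbs_measure_def gibbs_measure_axioms_def by blast

context gibbs_measure
begin

lemma exp_birkhoff_le_prob_cylinder:
  assumes "n \<ge> 1" "x \<in> shift_space A"
  shows "exp (- P * real n + birkhoff_sum \<phi> n x) \<le> c0 * prob (cylinder A (map x [0..<n]))"
  using gibbs_inequality[OF assms] c0_ge_1 by (intro ratio_bounds_imp_mult_bounds) auto

lemma prob_cylinder_le_exp_birkhoff:
  assumes "n \<ge> 1" "x \<in> shift_space A"
  shows "prob (cylinder A (map x [0..<n])) \<le> c0 * exp (- P * real n + birkhoff_sum \<phi> n x)"
  using gibbs_inequality[OF assms] c0_ge_1 by (intro ratio_bounds_imp_mult_bounds) auto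

lemma cylinder_in_events:
  assumes "n \<ge> 1" "x \<in> shift_space A"
  shows "cylinder A (map x [0..<n]) \<in> events"
proof -
  have "0 < c0 * prob (cylinder A (map x [0..<n]))"
    using exp_birkhoff_le_prob_cylinder[OF assms] by (meson exp_gt_zero less_le_trans)
  then show ?thesis
    using measure_notin_sets by fastforce
qed

lemma exp_le_prob_first_letter_cylinder:
  assumes "x \<in> shift_space A"
  shows "exp (\<phi> x) \<le> c0 * exp P * prob (cylinder A [x 0])"
proof -
  have "exp (\<phi> x) = exp P * exp (- P * real 1 + birkhoff_sum \<phi> 1 x)"
    by (simp add: birkhoff_sum_def flip: exp_add)
  also have "\<dots> \<le> exp P * (c0 * prob (cylinder A (map x [0..<1])))"
    using exp_birkhoff_le_prob_cylinder[of 1, OF _ assms] by simp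
  finally show ?thesis
    by (simp add: ac_simps)
qed

lemma potential_le_ln_c0_plus_P:
  assumes "x \<in> shift_space A"
  shows "\<phi> x \<le> ln c0 + P"
proof -
  have "exp (\<phi> x) \<le> c0 * exp P * prob (cylinder A [x 0])"
    by (rule exp_le_prob_first_letter_cylinder[OF assms])
  also have "\<dots> \<le> c0 * exp P * 1"
    using c0_ge_1 by (intro mult_left_mono prob_le_1) simp
  also have "\<dots> = exp (ln c0 + P)"
    using c0_ge_1 by (simp add: exp_add)
  finally show ?thesis
    by simp
qed

lemma INF_potential_eq_minus_infinity:
  assumes no_zero_row: "\<forall>i. \<exists>j. A i j"
  shows "(INF x \<in> shift_space A. ereal (\<phi> x)) = - \<infinity>"
proof (rule ereal_bot)
  fix B :: real
  obtain N0 :: nat where "real N0 > c0 * exp P / exp B"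
    using reals_Archimedean2 by blast
  then obtain N :: nat where N: "real N > c0 * exp P / exp B" "N \<ge> 1"
    by (intro that[of "Suc N0"]) auto
  have "cylinder A [a] \<in> events" for a
    using shift_space_point_starting_at[OF no_zero_row, of a] cylinder_in_events[of 1] by force
  moreover have "disjoint_family_on (\<lambda>a. cylinder A [a]) {..<N}"
    unfolding disjoint_family_on_def cylinder_def by auto
  ultimately have "\<exists>a\<in>{..<N}. prob (cylinder A [a]) \<le> 1 / card {..<N}"
    using N(2) by (intro exists_small_disjoint_event) (auto simp: lessThan_empty_iff)
  then obtain a where a: "prob (cylinder A [a]) \<le> 1 / real N"
    by auto
  obtain x where x: "x \<in> shift_space A" "x 0 = a"
    using shift_space_point_starting_at[OF no_zero_row] .
  have "exp (\<phi> x) \<le> c0 * exp P * (1 / real N)"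
    using exp_le_prob_first_letter_cylinder[OF x(1)] mult_left_mono[OF a, of "c0 * exp P"] x(2) c0_ge_1
    by simp
  also have "\<dots> < exp B"
    using N by (simp add: pos_divide_less_eq ac_simps)
  finally have "ereal (\<phi> x) \<le> ereal B"
    by simp
  moreover have "(INF x \<in> shift_space A. ereal (\<phi> x)) \<le> ereal (\<phi> x)"
    using x(1) by (rule INF_lower)
  ultimately show "(INF x \<in> shift_space A. ereal (\<phi> x)) \<le> ereal B"
    by (rule order_trans[rotated])
qed

lemma variation_le_two_ln_c0:
  assumes "n \<ge> 1"
  shows "variation A \<phi> n \<le> ereal (2 * ln c0)"
  unfolding variation_def
proof (intro SUP_least, clarify)
  fix w x y
  assume w: "w \<in> admissible_words A n" and x: "x \<in> cylinder A w" and y: "y \<in> cylinder A w"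
  have "length w = n"
    using w by (simp add: admissible_words_def)
  then have xw: "map x [0..<n] = w" and yw: "map y [0..<n] = w"
    using x y by (auto dest: map_upt_length_cylinder)
  have X: "x \<in> shift_space A" "y \<in> shift_space A"
    using x y by (auto simp: cylinder_def)
  define u where "u = - P * real n + birkhoff_sum \<phi> n x"
  define v where "v = - P * real n + birkhoff_sum \<phi> n y"
  have "exp u \<le> c0 * prob (cylinder A w)"
    using exp_birkhoff_le_prob_cylinder[OF assms X(1)] unfolding u_def xw .
  also have "\<dots> \<le> c0 * (c0 * exp v)"
    using prob_cylinder_le_exp_birkhoff[OF assms X(2)] c0_ge_1
    unfolding v_def yw by (intro mult_left_mono) auto
  also have "\<dots> = exp (ln c0) * exp (ln c0) * exp v"
    using c0_ge_1 by simp
  also have "\<dots> = exp (2 * ln c0 + v)"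
    by (simp only: mult_2 exp_add)
  finally have "u - v \<le> 2 * ln c0"
    by simp
  then show "ereal (birkhoff_sum \<phi> n (fst (x, y)) - birkhoff_sum \<phi> n (snd (x, y))) \<le> ereal (2 * ln c0)"
    by (simp add: u_def v_def)
qed

end

theorem lemma2p2:
  fixes A :: "nat \<Rightarrow> nat \<Rightarrow> bool" and \<phi> :: "(nat \<Rightarrow> nat) \<Rightarrow> real"
  assumes no_zero_row: "\<forall>i. \<exists>j. A i j"
    and no_zero_col: "\<forall>j. \<exists>i. A i j"
    and meas: "\<phi> \<in> borel_measurable (restrict_space borel (shift_space A))"
    and gibbs: "\<exists>\<mu>. gibbs_state A \<phi> \<mu>"
  shows "(SUP x \<in> shift_space A. ereal (\<phi> x)) < \<infinity> \<and>
         (INF x \<in> shift_space A. ereal (\<phi> x)) = - \<infinity> \<and>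
         (SUP n \<in> {1..}. variation A \<phi> n) < \<infinity>"
proof -
  obtain \<mu> c0 P where "gibbs_measure \<mu> A \<phi> c0 P"
    using gibbs gibbs_stateE by metis
  then interpret gibbs_measure \<mu> A \<phi> c0 P .
  have "(SUP x \<in> shift_space A. ereal (\<phi> x)) \<le> ereal (ln c0 + P)"
    using potential_le_ln_c0_plus_P by (intro SUP_least) simp
  then have "(SUP x \<in> shift_space A. ereal (\<phi> x)) < \<infinity>"
    by (rule order.strict_trans1) simp
  moreover have "(SUP n \<in> {1..}. variation A \<phi> n) \<le> ereal (2 * ln c0)"
    using variation_le_two_ln_c0 by (intro SUP_least) simp
  then have "(SUP n \<in> {1..}. variation A \<phi> n) < \<infinity>"
    by (rule order.strict_trans1) simp
  ultimately show ?thesis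
    using INF_potential_eq_minus_infinity[OF no_zero_row] by blast
qed

end
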